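(* Let $F$ be a field of characteristic not $2$, let $a\in F^*$ be a non-square, and let $L=F(\sqrt{a})$. Then $F^{(3)}\subset L^{(3)}$.
   Context: All fields are taken inside a fixed quadratic closure $F_q$ of $F$. For a field $K$ of characteristic not $2$, define $K^{(1)}=K$ and, for $n\ge 1$, $K^{(n+1)}$ is the compositum of all quadratic extensions of $K^{(n)}$ which are Galois over $K$. *)

theory Defs
  imports "HOL-Computational_Algebra.Polynomial"
begin

text \<open>The ambient type 'a plays the role of the fixed quadratic closure F_q.
 Subfields of it are represented as sets.\<close>

definition subfield :: "'a::field set \<Rightarrow> bool" where
  "subfield K \<longleftrightarrow> 0 \<in> K \<and> 1 \<in> K \<and>
     (\<forall>x\<in>K. \<forall>y\<in>K. x + y \<in> K \<and> x - y \<in> K \<and> x * y \<in> K) \<and>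
     (\<forall>x\<in>K. inverse x \<in> K)"

definition gen_field :: "'a::field set \<Rightarrow> 'a set" where
  "gen_field S = \<Inter>{K. subfield K \<and> S \<subseteq> K}"

definition is_quadratic_closure_of :: "'a::field set \<Rightarrow> bool" where
  "is_quadratic_closure_of F \<longleftrightarrow> (\<forall>x::'a. \<exists>y. y * y = x) \<and>
     (\<forall>K. subfield K \<and> F \<subseteq> K \<and> (\<forall>x\<in>K. \<exists>y\<in>K. y * y = x) \<longrightarrow> K = UNIV)"

definition ext_dim :: "'a::field set \<Rightarrow> 'a set \<Rightarrow> nat \<Rightarrow> bool" where
  "ext_dim K E n \<longleftrightarrow> (\<exists>b::'a list. length b = n \<and> set b \<subseteq> E \<and>
     (\<forall>x\<in>E. \<exists>!c::nat \<Rightarrow> 'a. (\<forall>i<n. c i \<in> K) \<and> (\<forall>i\<ge>n. c i = 0) \<and>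
        x = (\<Sum>i<n. c i * b ! i)))"

definition quadratic_ext :: "'a::field set \<Rightarrow> 'a set \<Rightarrow> bool" where
  "quadratic_ext K E \<longleftrightarrow> subfield K \<and> subfield E \<and> K \<subseteq> E \<and> ext_dim K E 2"

definition poly_over :: "'a::field set \<Rightarrow> 'a poly \<Rightarrow> bool" where
  "poly_over K p \<longleftrightarrow> (\<forall>i. coeff p i \<in> K)"

definition irreducible_over :: "'a::field set \<Rightarrow> 'a poly \<Rightarrow> bool" where
  "irreducible_over K p \<longleftrightarrow> poly_over K p \<and> degree p \<ge> 1 \<and>
     \<not> (\<exists>q r. poly_over K q \<and> poly_over K r \<and> degree q \<ge> 1 \<and> degree r \<ge> 1 \<and> p = q * r)"

text \<open>E is a Galois (algebraic, normal and separable) extension of K: every element of E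
 is a root of an irreducible polynomial over K which splits over E into distinct linear
 factors.\<close>
definition galois_over :: "'a::field set \<Rightarrow> 'a set \<Rightarrow> bool" where
  "galois_over K E \<longleftrightarrow> subfield K \<and> subfield E \<and> K \<subseteq> E \<and>
     (\<forall>x\<in>E. \<exists>p. irreducible_over K p \<and> poly p x = 0 \<and>
        (\<exists>rs. distinct rs \<and> set rs \<subseteq> E \<and>
              p = smult (lead_coeff p) (\<Prod>r\<leftarrow>rs. [:- r, 1:])))"

definition quad_step :: "'a::field set \<Rightarrow> 'a set \<Rightarrow> 'a set" where
  "quad_step K M = gen_field (M \<union> \<Union>{E. quadratic_ext M E \<and> galois_over K E})"

text \<open>kup K n = K^{(n)} for n \<ge> 1 (the value at 0 is irrelevant).\<close>
fun kup :: "'a::field set \<Rightarrow> nat \<Rightarrow> 'a set" where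
  "kup K 0 = K"
| "kup K (Suc 0) = K"
| "kup K (Suc (Suc n)) = quad_step K (kup K (Suc n))"

end

theory Submission
  imports Defs
begin

(* Every quadratic extension of F is F(t) with t^2 in F, and t^2 also lies in L, so
   F^(2) \<subseteq> L^(2); with F_q quadratically closed, L^(2) is the field generated by all
   square roots of elements of L.  A quadratic extension E of F^(2) which is Galois over F is
   F^(2)(w) with w^2 in F^(2) \<subseteq> L^(2), and all roots of the minimal polynomial of w over F
   lie in E.  Hence M = L^(2)(w) is Galois over L: each element of M lies in a finite tower
   L(t_1, ..., t_n, w) with t_i^2 in L that is mapped into itself by every L-homomorphism
   into F_q, and the orbit polynomial of an element of such a tower has coefficients fixed by
   all these homomorphisms, hence in L.  So M \<subseteq> L^(3), and therefore F^(3) \<subseteq> L^(3). *)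

section \<open>Subfields and generated fields\<close>

lemma subfieldD:
  assumes "subfield K"
  shows "0 \<in> K" "1 \<in> K" "x \<in> K \<Longrightarrow> y \<in> K \<Longrightarrow> x + y \<in> K"
    "x \<in> K \<Longrightarrow> y \<in> K \<Longrightarrow> x - y \<in> K" "x \<in> K \<Longrightarrow> y \<in> K \<Longrightarrow> x * y \<in> K"
    "x \<in> K \<Longrightarrow> inverse x \<in> K"
  using assms unfolding subfield_def by auto

lemma subfield_uminus: "subfield K \<Longrightarrow> x \<in> K \<Longrightarrow> - x \<in> K"
  using subfieldD(1)[of K] subfieldD(4)[of K 0 x] by simp

lemma subfield_divide: "subfield K \<Longrightarrow> x \<in> K \<Longrightarrow> y \<in> K \<Longrightarrow> x / y \<in> K"
  by (simp add: divide_inverse subfieldD)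

lemma subfield_gen_field: "subfield (gen_field S)"
  unfolding gen_field_def subfield_def by auto

lemma gen_field_superset: "S \<subseteq> gen_field S"
  unfolding gen_field_def by auto

lemma gen_field_least: "subfield K \<Longrightarrow> S \<subseteq> K \<Longrightarrow> gen_field S \<subseteq> K"
  unfolding gen_field_def by auto

lemma gen_field_mono: "S \<subseteq> T \<Longrightarrow> gen_field S \<subseteq> gen_field T"
  by (meson gen_field_least gen_field_superset order_trans subfield_gen_field)

lemma gen_field_idem: "subfield K \<Longrightarrow> gen_field K = K"
  by (simp add: gen_field_least gen_field_superset subset_antisym)

lemma gen_field_Un_gen_field: "gen_field (gen_field S \<union> T) = gen_field (S \<union> T)"
proof
  show "gen_field (gen_field S \<union> T) \<subseteq> gen_field (S \<union> T)"
    by (rule gen_field_least[OF subfield_gen_field])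
       (metis Un_least Un_upper1 Un_upper2 gen_field_mono gen_field_superset order_trans)
  show "gen_field (S \<union> T) \<subseteq> gen_field (gen_field S \<union> T)"
    by (rule gen_field_mono) (use gen_field_superset in blast)
qed

text \<open>The fields generated by the finite subsets of S form a directed union, which is
  therefore a subfield.\<close>
lemma gen_field_finite_support:
  assumes "x \<in> gen_field S"
  shows "\<exists>T. finite T \<and> T \<subseteq> S \<and> x \<in> gen_field T"
proof -
  define U where "U = {x. \<exists>T. finite T \<and> T \<subseteq> S \<and> x \<in> gen_field T}"
  have common: "\<exists>T. finite T \<and> T \<subseteq> S \<and> x \<in> gen_field T \<and> y \<in> gen_field T"
    if "x \<in> U" "y \<in> U" for x y
  proof -
    obtain T1 where "finite T1" "T1 \<subseteq> S" "x \<in> gen_field T1"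
      using \<open>x \<in> U\<close> by (auto simp: U_def)
    moreover obtain T2 where "finite T2" "T2 \<subseteq> S" "y \<in> gen_field T2"
      using \<open>y \<in> U\<close> by (auto simp: U_def)
    moreover have "gen_field T1 \<subseteq> gen_field (T1 \<union> T2)" "gen_field T2 \<subseteq> gen_field (T1 \<union> T2)"
      by (simp_all add: gen_field_mono)
    ultimately show ?thesis by (intro exI[of _ "T1 \<union> T2"]) auto
  qed
  have "subfield U"
    unfolding subfield_def
  proof (intro conjI ballI)
    show "0 \<in> U" "1 \<in> U"
      using subfieldD(1,2)[OF subfield_gen_field, of "{}"] by (auto simp: U_def)
  next
    fix x y assume "x \<in> U" "y \<in> U"
    then obtain T where T: "finite T" "T \<subseteq> S" and xy: "x \<in> gen_field T" "y \<in> gen_field T"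
      using common by blast
    note G = subfieldD[OF subfield_gen_field[of T]]
    show "x + y \<in> U" "x - y \<in> U" "x * y \<in> U"
      using G(3-5)[OF xy] T by (auto simp: U_def)
  next
    fix x assume "x \<in> U"
    then obtain T where "finite T" "T \<subseteq> S" "x \<in> gen_field T"
      by (auto simp: U_def)
    then show "inverse x \<in> U"
      using subfieldD(6)[OF subfield_gen_field] by (auto simp: U_def)
  qed
  moreover have "S \<subseteq> U"
    using gen_field_superset[of "{x}" for x] by (auto simp: U_def)
  ultimately have "gen_field S \<subseteq> U"
    by (rule gen_field_least)
  then show ?thesis
    using assms by (auto simp: U_def)
qed

lemma finite_subset_gen_field_finite_support:
  assumes "finite X" "X \<subseteq> gen_field S"
  shows "\<exists>T. finite T \<and> T \<subseteq> S \<and> X \<subseteq> gen_field T"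
  using assms
proof (induction X rule: finite_induct)
  case empty
  show ?case by auto
next
  case (insert x X)
  obtain T1 where T1: "finite T1" "T1 \<subseteq> S" "X \<subseteq> gen_field T1"
    using insert.IH insert.prems by auto
  obtain T2 where T2: "finite T2" "T2 \<subseteq> S" "x \<in> gen_field T2"
    using gen_field_finite_support[of x S] insert.prems by auto
  have "gen_field T1 \<subseteq> gen_field (T1 \<union> T2)" "gen_field T2 \<subseteq> gen_field (T1 \<union> T2)"
    by (simp_all add: gen_field_mono)
  then show ?case using T1 T2 by (intro exI[of _ "T1 \<union> T2"]) auto
qed

section \<open>Homomorphisms fixing a subfield\<close>

definition hom_fixing :: "'a::field set \<Rightarrow> 'a set \<Rightarrow> ('a \<Rightarrow> 'a) \<Rightarrow> bool" where
  "hom_fixing K A \<sigma> \<longleftrightarrow> (\<forall>k\<in>K. \<sigma> k = k) \<and> \<sigma> 1 = 1 \<and>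
     (\<forall>x\<in>A. \<forall>y\<in>A. \<sigma> (x + y) = \<sigma> x + \<sigma> y \<and> \<sigma> (x * y) = \<sigma> x * \<sigma> y)"

lemma hom_fixing_fix: "hom_fixing K A \<sigma> \<Longrightarrow> k \<in> K \<Longrightarrow> \<sigma> k = k"
  unfolding hom_fixing_def by auto

lemma hom_fixing_one: "hom_fixing K A \<sigma> \<Longrightarrow> \<sigma> 1 = 1"
  unfolding hom_fixing_def by auto

lemma hom_fixing_add: "hom_fixing K A \<sigma> \<Longrightarrow> x \<in> A \<Longrightarrow> y \<in> A \<Longrightarrow> \<sigma> (x + y) = \<sigma> x + \<sigma> y"
  unfolding hom_fixing_def by auto

lemma hom_fixing_mult: "hom_fixing K A \<sigma> \<Longrightarrow> x \<in> A \<Longrightarrow> y \<in> A \<Longrightarrow> \<sigma> (x * y) = \<sigma> x * \<sigma> y"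
  unfolding hom_fixing_def by auto

context
  fixes K A :: "'a::field set" and \<sigma> :: "'a \<Rightarrow> 'a"
  assumes hom: "hom_fixing K A \<sigma>" and A: "subfield A"
begin

lemma hom_fixing_add_mult:
  "x \<in> A \<Longrightarrow> y \<in> A \<Longrightarrow> z \<in> A \<Longrightarrow> \<sigma> (x + y * z) = \<sigma> x + \<sigma> y * \<sigma> z"
  using subfieldD(5)[OF A] by (simp add: hom_fixing_add[OF hom] hom_fixing_mult[OF hom])

lemma hom_fixing_zero: "\<sigma> 0 = 0"
proof -
  have "\<sigma> (0 + 0) = \<sigma> 0 + \<sigma> 0"
    using hom_fixing_add[OF hom] subfieldD(1)[OF A] by blast
  then show ?thesis by (metis add.right_neutral add_left_cancel)
qed

lemma hom_fixing_uminus: "x \<in> A \<Longrightarrow> \<sigma> (- x) = - \<sigma> x"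
proof -
  assume x: "x \<in> A"
  have "\<sigma> x + \<sigma> (- x) = \<sigma> (x + - x)"
    using hom_fixing_add[OF hom, of x "- x"] subfield_uminus[OF A x] x by simp
  then show ?thesis
    by (simp add: hom_fixing_zero add_eq_0_iff2)
qed

lemma hom_fixing_diff: "x \<in> A \<Longrightarrow> y \<in> A \<Longrightarrow> \<sigma> (x - y) = \<sigma> x - \<sigma> y"
  using hom_fixing_add[OF hom, of x "- y"] hom_fixing_uminus[of y] subfield_uminus[OF A] by simp

lemma hom_fixing_inverse: "x \<in> A \<Longrightarrow> \<sigma> (inverse x) = inverse (\<sigma> x)"
proof (cases "x = 0")
  case True
  then show ?thesis by (simp add: hom_fixing_zero)
next
  case False
  assume x: "x \<in> A"
  have "\<sigma> x * \<sigma> (inverse x) = 1"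
    using hom_fixing_mult[OF hom, of x "inverse x"] hom_fixing_one[OF hom] subfieldD(6)[OF A] x False by auto
  then show ?thesis by (metis inverse_unique)
qed

lemma hom_fixing_inj_on: "inj_on \<sigma> A"
proof (rule inj_onI)
  fix x y assume xy: "x \<in> A" "y \<in> A" "\<sigma> x = \<sigma> y"
  then have "\<sigma> (x - y) * \<sigma> (inverse (x - y)) = 0"
    by (simp add: hom_fixing_diff)
  then have "\<sigma> ((x - y) * inverse (x - y)) = 0"
    using xy subfieldD(4,6)[OF A] by (simp add: hom_fixing_mult[OF hom])
  then show "x = y"
    using hom_fixing_one[OF hom] by (cases "x = y") auto
qed

end

lemma hom_fixing_id: "hom_fixing K A id"
  unfolding hom_fixing_def by auto

lemma hom_fixing_mono: "hom_fixing K A \<sigma> \<Longrightarrow> B \<subseteq> A \<Longrightarrow> hom_fixing K B \<sigma>"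
  unfolding hom_fixing_def by blast

lemma hom_fixing_comp:
  "hom_fixing K A \<sigma> \<Longrightarrow> \<sigma> ` A \<subseteq> B \<Longrightarrow> hom_fixing K B \<tau> \<Longrightarrow> hom_fixing K A (\<tau> \<circ> \<sigma>)"
  unfolding hom_fixing_def by (auto simp: image_subset_iff)

lemma hom_fixing_image_gen_field_subset:
  assumes hom: "hom_fixing K (gen_field S) \<sigma>" and N: "subfield N" and img: "\<sigma> ` S \<subseteq> N"
  shows "\<sigma> ` gen_field S \<subseteq> N"
proof -
  define B where "B = {x \<in> gen_field S. \<sigma> x \<in> N}"
  note G = subfieldD[OF subfield_gen_field[of S]]
  note hom' = hom subfield_gen_field
  have "subfield B"
    unfolding subfield_def
  proof (intro conjI ballI)
    show "0 \<in> B" "1 \<in> B"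
      using G(1,2) subfieldD(1,2)[OF N] hom_fixing_zero[OF hom'] hom_fixing_one[OF hom]
      by (auto simp: B_def)
  next
    fix x y assume "x \<in> B" "y \<in> B"
    then have xy: "x \<in> gen_field S" "y \<in> gen_field S" "\<sigma> x \<in> N" "\<sigma> y \<in> N"
      by (auto simp: B_def)
    show "x + y \<in> B" "x - y \<in> B" "x * y \<in> B"
      using xy G(3-5) subfieldD(3-5)[OF N]
      by (auto simp: B_def hom_fixing_add[OF hom] hom_fixing_diff[OF hom'] hom_fixing_mult[OF hom])
  next
    fix x assume "x \<in> B"
    then show "inverse x \<in> B"
      using G(6) subfieldD(6)[OF N] by (auto simp: B_def hom_fixing_inverse[OF hom'])
  qed
  moreover have "S \<subseteq> B"
    using img gen_field_superset[of S] by (auto simp: B_def)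
  ultimately have "gen_field S \<subseteq> B"
    by (rule gen_field_least)
  then show ?thesis
    by (auto simp: B_def)
qed

lemma poly_over_mem:
  assumes B: "subfield B" and y: "y \<in> B"
  shows "poly_over B p \<Longrightarrow> poly p y \<in> B"
proof (induction p rule: pCons_induct)
  case 0
  then show ?case using subfieldD(1)[OF B] by simp
next
  case (pCons a p)
  then have "a \<in> B" "poly_over B p"
    unfolding poly_over_def by (metis coeff_pCons_0, metis coeff_pCons_Suc)
  then show ?case using pCons.IH subfieldD[OF B] y by simp
qed

lemma hom_fixing_poly:
  assumes hom: "hom_fixing K B \<sigma>" and B: "subfield B" and KB: "K \<subseteq> B" and y: "y \<in> B"
  shows "poly_over K p \<Longrightarrow> \<sigma> (poly p y) = poly p (\<sigma> y)"
proof (induction p rule: pCons_induct)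
  case 0
  then show ?case using hom_fixing_zero[OF hom B] by simp
next
  case (pCons a p)
  then have a: "a \<in> K" and p: "poly_over K p"
    unfolding poly_over_def by (metis coeff_pCons_0, metis coeff_pCons_Suc)
  then have "poly p y \<in> B" using poly_over_mem[OF B y] KB unfolding poly_over_def by blast
  then have "\<sigma> (a + y * poly p y) = a + \<sigma> y * \<sigma> (poly p y)"
    using a KB y hom_fixing_add_mult[OF hom B] hom_fixing_fix[OF hom] by auto
  then show ?case using pCons.IH[OF p] by simp
qed

section \<open>Adjoining a square root\<close>

definition quad_span :: "'a::field set \<Rightarrow> 'a \<Rightarrow> 'a set" where
  "quad_span A z = {a + b * z | a b. a \<in> A \<and> b \<in> A}"

lemma quad_spanI: "a \<in> A \<Longrightarrow> b \<in> A \<Longrightarrow> a + b * z \<in> quad_span A z"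
  unfolding quad_span_def by blast

lemma quad_spanE:
  assumes "x \<in> quad_span A z"
  obtains a b where "a \<in> A" "b \<in> A" "x = a + b * z"
  using assms unfolding quad_span_def by blast

lemma quad_span_mono: "A \<subseteq> B \<Longrightarrow> quad_span A z \<subseteq> quad_span B z"
  unfolding quad_span_def by blast

lemma quad_span_subset: "subfield B \<Longrightarrow> A \<subseteq> B \<Longrightarrow> z \<in> B \<Longrightarrow> quad_span A z \<subseteq> B"
  unfolding quad_span_def using subfieldD(3,5) by blast

lemma quad_span_coords_unique:
  assumes A: "subfield A" and z: "z \<notin> A" and coords: "a \<in> A" "b \<in> A" "a' \<in> A" "b' \<in> A"
    and eq: "a + b * z = a' + b' * z"
  shows "a = a' \<and> b = b'"
proof (cases "b = b'")
  case True
  then show ?thesis using eq by simp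
next
  case False
  have "(b - b') * z = a' - a" using eq by (simp add: algebra_simps)
  then have "z = (a' - a) / (b - b')" using False by (simp add: field_simps)
  then have "z \<in> A" using A coords by (simp add: subfield_divide subfieldD)
  then show ?thesis using z by simp
qed

lemma subfield_quad_span:
  assumes A: "subfield A" and sq: "z * z \<in> A"
  shows "subfield (quad_span A z)"
proof (cases "z \<in> A")
  case True
  have "quad_span A z = A"
  proof
    show "quad_span A z \<subseteq> A" using quad_span_subset[OF A order_refl True] .
    show "A \<subseteq> quad_span A z" using quad_spanI[of _ A 0 z] subfieldD(1)[OF A] by force
  qed
  then show ?thesis using A by simp
next
  case z: False
  note sf = subfieldD[OF A]
  have "0 \<in> quad_span A z" "1 \<in> quad_span A z"
    using quad_spanI[of 0 A 0 z] quad_spanI[of 1 A 0 z] sf(1,2) by simp_all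
  moreover have "x + y \<in> quad_span A z \<and> x - y \<in> quad_span A z \<and> x * y \<in> quad_span A z"
    if x: "x \<in> quad_span A z" and y: "y \<in> quad_span A z" for x y
  proof -
    obtain a b where ab: "a \<in> A" "b \<in> A" "x = a + b * z"
      using x by (rule quad_spanE)
    obtain c d where cd: "c \<in> A" "d \<in> A" "y = c + d * z"
      using y by (rule quad_spanE)
    have "x + y = (a + c) + (b + d) * z" "x - y = (a - c) + (b - d) * z"
      "x * y = (a * c + b * d * (z * z)) + (a * d + b * c) * z"
      using ab cd by (simp_all add: algebra_simps)
    moreover have "(a + c) + (b + d) * z \<in> quad_span A z" "(a - c) + (b - d) * z \<in> quad_span A z"
      "(a * c + b * d * (z * z)) + (a * d + b * c) * z \<in> quad_span A z"
      using ab cd sq sf(3-5) by (metis quad_spanI)+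
    ultimately show ?thesis by (simp only:)
  qed
  moreover have "inverse x \<in> quad_span A z" if x: "x \<in> quad_span A z" for x
  proof -
    obtain a b where ab: "a \<in> A" "b \<in> A" "x = a + b * z"
      using x by (rule quad_spanE)
    define n where "n = a * a - b * b * (z * z)"
    have nA: "n \<in> A" using ab sq by (simp add: n_def sf)
    show ?thesis
    proof (cases "n = 0")
      case True
      have "x = 0"
      proof (cases "b = 0")
        case True
        then show ?thesis using \<open>n = 0\<close> ab by (simp add: n_def)
      next
        case False
        have "z * z = (a / b) * (a / b)" using \<open>n = 0\<close> False by (simp add: n_def field_simps)
        then have "z = a / b \<or> z = - (a / b)" by (simp only: square_eq_iff)
        then show ?thesis using z ab subfield_divide[OF A] subfield_uminus[OF A] by metis
      qed
      then show ?thesis using quad_spanI[of 0 A 0 z] sf(1) by simp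
    next
      case False
      have "x * (a - b * z) = n" by (simp add: ab n_def algebra_simps)
      moreover have "a / n + (- b / n) * z = (a - b * z) / n" by (simp add: diff_divide_distrib)
      ultimately have "x * (a / n + (- b / n) * z) = 1"
        using False by simp
      then have "inverse x = a / n + (- b / n) * z" by (metis inverse_unique)
      moreover have "a / n + (- b / n) * z \<in> quad_span A z"
        using ab nA subfield_divide[OF A] subfield_uminus[OF A] by (intro quad_spanI) auto
      ultimately show ?thesis by (simp only:)
    qed
  qed
  ultimately show ?thesis unfolding subfield_def by blast
qed

lemma gen_field_insert_sqrt:
  assumes A: "subfield A" and sq: "z * z \<in> A"
  shows "gen_field (A \<union> {z}) = quad_span A z"
proof
  have "A \<subseteq> quad_span A z" "z \<in> quad_span A z"
    using quad_spanI[of _ A 0 z] quad_spanI[of 0 A 1 z] subfieldD(1,2)[OF A] by force+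
  then show "gen_field (A \<union> {z}) \<subseteq> quad_span A z"
    by (intro gen_field_least subfield_quad_span A sq) auto
  have "A \<union> {z} \<subseteq> gen_field (A \<union> {z})" by (rule gen_field_superset)
  then show "quad_span A z \<subseteq> gen_field (A \<union> {z})"
    by (intro quad_span_subset subfield_gen_field) auto
qed

lemma hom_fixing_extend_sqrt:
  assumes A: "subfield A" and KA: "K \<subseteq> A" and hom: "hom_fixing K A \<sigma>"
    and sq: "z * z \<in> A" and z: "z \<notin> A" and z': "z' * z' = \<sigma> (z * z)"
  shows "\<exists>\<tau>. hom_fixing K (gen_field (A \<union> {z})) \<tau> \<and> (\<forall>x\<in>A. \<tau> x = \<sigma> x) \<and> \<tau> z = z'"
proof -
  note sf = subfieldD[OF A]
  define \<tau> where
    "\<tau> x = (SOME y. \<exists>a\<in>A. \<exists>b\<in>A. x = a + b * z \<and> y = \<sigma> a + \<sigma> b * z')" for x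
  have \<tau>: "\<tau> (a + b * z) = \<sigma> a + \<sigma> b * z'" if ab: "a \<in> A" "b \<in> A" for a b
  proof -
    have "\<exists>a'\<in>A. \<exists>b'\<in>A. a + b * z = a' + b' * z \<and> \<tau> (a + b * z) = \<sigma> a' + \<sigma> b' * z'"
      unfolding \<tau>_def by (rule someI_ex) (use ab in blast)
    then show ?thesis
      using quad_span_coords_unique[OF A z ab] by metis
  qed
  have \<tau>A: "\<tau> x = \<sigma> x" if "x \<in> A" for x
    using \<tau>[of x 0] that sf(1) hom_fixing_zero[OF hom A] by simp
  have \<tau>z: "\<tau> z = z'"
    using \<tau>[of 0 1] sf(1,2) hom_fixing_zero[OF hom A] hom_fixing_one[OF hom] by simp
  have "hom_fixing K (quad_span A z) \<tau>"
    unfolding hom_fixing_def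
  proof (intro conjI ballI)
    fix k assume "k \<in> K"
    then show "\<tau> k = k" using \<tau>A KA hom_fixing_fix[OF hom] by auto
  next
    show "\<tau> 1 = 1" using \<tau>A sf(2) hom_fixing_one[OF hom] by simp
  next
    fix x y assume x: "x \<in> quad_span A z" and y: "y \<in> quad_span A z"
    obtain a b where ab: "a \<in> A" "b \<in> A" "x = a + b * z"
      using x by (rule quad_spanE)
    obtain c d where cd: "c \<in> A" "d \<in> A" "y = c + d * z"
      using y by (rule quad_spanE)
    note \<sigma>_ops = hom_fixing_add[OF hom] hom_fixing_mult[OF hom]
    have "\<tau> (x + y) = \<tau> ((a + c) + (b + d) * z)"
      by (rule arg_cong[of _ _ \<tau>]) (simp add: ab cd algebra_simps)
    also have "\<dots> = \<sigma> (a + c) + \<sigma> (b + d) * z'"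
      using ab cd sf by (intro \<tau>) auto
    also have "\<dots> = \<tau> x + \<tau> y"
      using ab cd by (simp add: \<tau> \<sigma>_ops algebra_simps)
    finally show "\<tau> (x + y) = \<tau> x + \<tau> y" .
    have "\<tau> (x * y) = \<tau> ((a * c + b * d * (z * z)) + (a * d + b * c) * z)"
      by (rule arg_cong[of _ _ \<tau>]) (simp add: ab cd algebra_simps)
    also have "\<dots> = \<sigma> (a * c + b * d * (z * z)) + \<sigma> (a * d + b * c) * z'"
      using ab cd sf sq by (intro \<tau>) auto
    also have "\<dots> = (\<sigma> a * \<sigma> c + \<sigma> b * \<sigma> d * (z' * z')) + (\<sigma> a * \<sigma> d + \<sigma> b * \<sigma> c) * z'"
      using ab cd sf sq z' by (simp add: \<sigma>_ops)
    also have "\<dots> = \<tau> x * \<tau> y"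
      using ab cd by (simp add: \<tau> algebra_simps)
    finally show "\<tau> (x * y) = \<tau> x * \<tau> y" .
  qed
  then show ?thesis
    using gen_field_insert_sqrt[OF A sq] \<tau>A \<tau>z by auto
qed

section \<open>Quadratic extensions\<close>

lemma ext_dim_2_basis:
  assumes dim: "ext_dim K E 2" and K: "subfield K" and E: "subfield E"
  obtains b0 b1 where "b0 \<in> E" "b1 \<in> E"
    "\<And>x. x \<in> E \<Longrightarrow> \<exists>c0\<in>K. \<exists>c1\<in>K. x = c0 * b0 + c1 * b1"
    "\<And>c0 c1. c0 \<in> K \<Longrightarrow> c1 \<in> K \<Longrightarrow> c0 * b0 + c1 * b1 = 0 \<Longrightarrow> c0 = 0 \<and> c1 = 0"
proof -
  obtain b where b: "length b = 2" "set b \<subseteq> E"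
    and coords: "\<forall>x\<in>E. \<exists>!c::nat \<Rightarrow> 'a. (\<forall>i<2. c i \<in> K) \<and> (\<forall>i\<ge>2. c i = 0) \<and>
                    x = (\<Sum>i<2. c i * b ! i)"
    using dim unfolding ext_dim_def by blast
  have sum2: "(\<Sum>i<2. f i) = f 0 + f (1::nat)" for f :: "nat \<Rightarrow> 'a"
    by (simp add: numeral_2_eq_2)
  define c where "c c0 c1 i = (if i = 0 then c0 else if i = 1 then c1 else 0)" for c0 c1 :: 'a and i :: nat
  have c_ok: "(\<forall>i<2. c c0 c1 i \<in> K) \<and> (\<forall>i\<ge>2. c c0 c1 i = 0) \<and>
      c0 * b ! 0 + c1 * b ! 1 = (\<Sum>i<2. c c0 c1 i * b ! i)" if "c0 \<in> K" "c1 \<in> K" for c0 c1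
    using that by (auto simp: sum2 c_def less_2_cases_iff)
  show ?thesis
  proof
    show "b ! 0 \<in> E" "b ! 1 \<in> E" using b by auto
  next
    fix x assume "x \<in> E"
    then obtain d where d: "\<forall>i<2. d i \<in> K" "x = (\<Sum>i<2. d i * b ! i)"
      using coords by blast
    then have "d 0 \<in> K" "d 1 \<in> K" "x = d 0 * b ! 0 + d 1 * b ! 1"
      by (auto simp: sum2)
    then show "\<exists>c0\<in>K. \<exists>c1\<in>K. x = c0 * b ! 0 + c1 * b ! 1"
      by blast
  next
    fix c0 c1 assume c01: "c0 \<in> K" "c1 \<in> K" "c0 * b ! 0 + c1 * b ! 1 = 0"
    have "\<exists>!d. (\<forall>i<2. d i \<in> K) \<and> (\<forall>i\<ge>2. d i = 0) \<and> 0 = (\<Sum>i<2. d i * b ! i)"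
      using coords subfieldD(1)[OF E] by blast
    moreover have "(\<forall>i<2. c 0 0 i \<in> K) \<and> (\<forall>i\<ge>2. c 0 0 i = 0) \<and> 0 = (\<Sum>i<2. c 0 0 i * b ! i)"
      using c_ok[of 0 0] subfieldD(1)[OF K] by simp
    moreover have "(\<forall>i<2. c c0 c1 i \<in> K) \<and> (\<forall>i\<ge>2. c c0 c1 i = 0) \<and> 0 = (\<Sum>i<2. c c0 c1 i * b ! i)"
      using c_ok[of c0 c1] c01 by simp
    ultimately have "c c0 c1 = c 0 0" by blast
    then show "c0 = 0 \<and> c1 = 0"
      unfolding c_def by (metis one_neq_zero)
  qed
qed

lemma span2_subset_quad_span:
  assumes K: "subfield K" and v: "v \<notin> K" and p: "p0 \<in> K" "p1 \<in> K" "1 = p0 * u + p1 * v"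
    and c: "c0 \<in> K" "c1 \<in> K"
  shows "c0 * u + c1 * v \<in> quad_span K v"
proof -
  have p0: "p0 \<noteq> 0"
  proof
    assume "p0 = 0"
    then have "inverse p1 = v" using p by (simp add: inverse_unique)
    then show False using v subfieldD(6)[OF K p(2)] by simp
  qed
  have u: "u = 1 / p0 - (p1 / p0) * v" using p(3) p0 by (simp add: field_simps)
  have "c0 * u + c1 * v = c0 / p0 + (c1 - c0 * (p1 / p0)) * v"
    unfolding u by (simp add: algebra_simps)
  moreover have "c0 / p0 + (c1 - c0 * (p1 / p0)) * v \<in> quad_span K v"
    using c p subfield_divide[OF K] subfieldD[OF K] by (intro quad_spanI) auto
  ultimately show ?thesis by (simp only:)
qed

lemma quadratic_ext_primitive:
  assumes K: "subfield K" and q: "quadratic_ext K E"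
  obtains y where "y \<in> E" "y \<notin> K" "E \<subseteq> quad_span K y"
proof -
  have E: "subfield E" and dim: "ext_dim K E 2" using q unfolding quadratic_ext_def by auto
  obtain b0 b1 where b: "b0 \<in> E" "b1 \<in> E"
    and span: "\<And>x. x \<in> E \<Longrightarrow> \<exists>c0\<in>K. \<exists>c1\<in>K. x = c0 * b0 + c1 * b1"
    and indep: "\<And>c0 c1. c0 \<in> K \<Longrightarrow> c1 \<in> K \<Longrightarrow> c0 * b0 + c1 * b1 = 0 \<Longrightarrow> c0 = 0 \<and> c1 = 0"
    by (rule ext_dim_2_basis[OF dim K E]) auto
  obtain p0 p1 where p: "p0 \<in> K" "p1 \<in> K" "1 = p0 * b0 + p1 * b1"
    using span subfieldD(2)[OF E] by blast
  show ?thesis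
  proof (cases "b1 \<in> K")
    case False
    have "E \<subseteq> quad_span K b1"
      using span span2_subset_quad_span[OF K False p] by blast
    then show ?thesis using that b False by blast
  next
    case True
    have "b0 \<notin> K"
    proof
      assume "b0 \<in> K"
      then have "b1 = 0 \<and> - b0 = 0"
        using indep[of b1 "- b0"] True subfield_uminus[OF K] by (simp add: algebra_simps)
      then show False using indep[of 1 0] subfieldD(1,2)[OF K] by simp
    qed
    moreover have "E \<subseteq> quad_span K b0"
    proof
      fix x assume "x \<in> E"
      then obtain c0 c1 where "c0 \<in> K" "c1 \<in> K" "x = c1 * b1 + c0 * b0"
        using span by (metis add.commute)
      moreover have "1 = p1 * b1 + p0 * b0" using p by (simp add: add.commute)
      ultimately show "x \<in> quad_span K b0"
        using span2_subset_quad_span[OF K \<open>b0 \<notin> K\<close>] p by blast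
    qed
    ultimately show ?thesis using that b by blast
  qed
qed

text \<open>Completing the square; this is where the characteristic must differ from 2.\<close>
lemma quadratic_ext_sqrt_generator:
  fixes K :: "'a::field set"
  assumes K: "subfield K" and two: "(1::'a) + 1 \<noteq> 0" and q: "quadratic_ext K E"
  obtains t where "t \<in> E" "t * t \<in> K" "t \<notin> K" "E \<subseteq> quad_span K t"
proof -
  have E: "subfield E" and KE: "K \<subseteq> E" using q unfolding quadratic_ext_def by auto
  obtain y where y: "y \<in> E" "y \<notin> K" and Ey: "E \<subseteq> quad_span K y"
    by (rule quadratic_ext_primitive[OF K q])
  obtain \<alpha> \<beta> where ab: "\<alpha> \<in> K" "\<beta> \<in> K" "y * y = \<alpha> + \<beta> * y"
    using Ey subfieldD(5)[OF E y(1) y(1)] by (auto elim!: quad_spanE)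
  define h where "h = \<beta> / (1 + 1)"
  have h: "h \<in> K" unfolding h_def using ab subfield_divide[OF K] subfieldD(2,3)[OF K] by metis
  have \<beta>: "\<beta> = h + h" unfolding h_def using two by (simp add: field_simps)
  define t where "t = y - h"
  have "t * t = \<alpha> + h * h"
    unfolding t_def using ab(3) by (simp add: \<beta> algebra_simps)
  then have "t * t \<in> K" using ab h subfieldD[OF K] by simp
  moreover have "t \<in> E" unfolding t_def using y h KE subfieldD(4)[OF E] by auto
  moreover have "t \<notin> K"
    using y h subfieldD(3)[OF K, of t h] unfolding t_def by auto
  moreover have "E \<subseteq> quad_span K t"
  proof
    fix x assume "x \<in> E"
    then obtain a c where ac: "a \<in> K" "c \<in> K" "x = a + c * y"
      using Ey by (auto elim!: quad_spanE)
    have "x = (a + c * h) + c * t" unfolding t_def ac(3) by (simp add: algebra_simps)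
    moreover have "(a + c * h) + c * t \<in> quad_span K t"
      using ac h subfieldD[OF K] by (intro quad_spanI) auto
    ultimately show "x \<in> quad_span K t" by (simp only:)
  qed
  ultimately show ?thesis using that by blast
qed

lemma quadratic_ext_gen_field_sqrt:
  assumes K: "subfield K" and sq: "z * z \<in> K" and z: "z \<notin> K"
  shows "quadratic_ext K (gen_field (K \<union> {z}))"
proof -
  have G: "gen_field (K \<union> {z}) = quad_span K z" by (rule gen_field_insert_sqrt[OF K sq])
  have sum2: "(\<Sum>i<2. f i) = f 0 + f (1::nat)" for f :: "nat \<Rightarrow> 'a"
    by (simp add: numeral_2_eq_2)
  have "ext_dim K (quad_span K z) 2"
    unfolding ext_dim_def
  proof (intro exI[of _ "[1, z]"] conjI ballI)
    show "length [1, z] = 2" by simp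
    show "set [1, z] \<subseteq> quad_span K z"
      using quad_spanI[of 1 K 0 z] quad_spanI[of 0 K 1 z] subfieldD(1,2)[OF K] by simp
  next
    fix x assume "x \<in> quad_span K z"
    then obtain a b where x: "a \<in> K" "b \<in> K" "x = a + b * z" by (rule quad_spanE)
    define c where "c i = (if i = 0 then a else if i = 1 then b else 0)" for i :: nat
    show "\<exists>!c. (\<forall>i<2. c i \<in> K) \<and> (\<forall>i\<ge>2. c i = 0) \<and> x = (\<Sum>i<2. c i * [1, z] ! i)"
    proof (rule ex1I[of _ c])
      show "(\<forall>i<2. c i \<in> K) \<and> (\<forall>i\<ge>2. c i = 0) \<and> x = (\<Sum>i<2. c i * [1, z] ! i)"
        using x unfolding sum2 c_def by (auto simp: less_2_cases_iff)
    next
      fix d assume d: "(\<forall>i<2. d i \<in> K) \<and> (\<forall>i\<ge>2. d i = 0) \<and> x = (\<Sum>i<2. d i * [1, z] ! i)"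
      then have "a + b * z = d 0 + d 1 * z" "d 0 \<in> K" "d 1 \<in> K" using x unfolding sum2 by auto
      then have "a = d 0 \<and> b = d 1" using quad_span_coords_unique[OF K z x(1,2)] by blast
      then show "d = c"
        using d unfolding c_def by (intro ext) (auto simp: not_less)
    qed
  qed
  moreover have "K \<subseteq> quad_span K z"
    using quad_spanI[of _ K 0 z] subfieldD(1)[OF K] by force
  ultimately show ?thesis
    unfolding quadratic_ext_def G using subfield_quad_span[OF K sq] K by blast
qed

section \<open>Orbit polynomials and Galois extensions\<close>

lemma poly_prod_linear_root: "poly (\<Prod>r\<leftarrow>rs. [:- r, 1:]) (x::'a::field) = 0 \<Longrightarrow> x \<in> set rs"
  by (induction rs) auto

lemma coeff_linear_mult:
  fixes y :: "'a::field"
  shows "coeff ([:- y, 1:] * g) n = - y * coeff g n + (if n = 0 then 0 else coeff g (n - 1))"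
  by (cases n) (simp_all add: coeff_pCons)

lemma poly_over_prod_linear:
  assumes N: "subfield N"
  shows "finite Os \<Longrightarrow> Os \<subseteq> N \<Longrightarrow> poly_over N (\<Prod>y\<in>Os. [:- y, 1:])"
proof (induction Os rule: finite_induct)
  case empty
  then show ?case unfolding poly_over_def using subfieldD(1,2)[OF N] by (auto simp: coeff_1)
next
  case (insert y Os)
  then have "\<forall>i. coeff (\<Prod>y\<in>Os. [:- y, 1:]) i \<in> N" "y \<in> N"
    unfolding poly_over_def by auto
  then show ?case
    unfolding poly_over_def
    using insert(1,2) coeff_linear_mult[of y] subfieldD[OF N] subfield_uminus[OF N] by simp
qed

lemma hom_fixing_coeff_prod_linear:
  assumes N: "subfield N" and hom: "hom_fixing K N \<tau>"
  shows "finite Os \<Longrightarrow> Os \<subseteq> N \<Longrightarrow>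
    \<tau> (coeff (\<Prod>y\<in>Os. [:- y, 1:]) n) = coeff (\<Prod>y\<in>Os. [:- \<tau> y, 1:]) n"
proof (induction Os arbitrary: n rule: finite_induct)
  case empty
  then show ?case using hom_fixing_zero[OF hom N] hom_fixing_one[OF hom] by (simp add: coeff_1)
next
  case (insert y Os)
  let ?g = "\<Prod>y\<in>Os. [:- y, 1:]"
  define d where "d = (if n = 0 then 0 else coeff ?g (n - 1))"
  have g: "coeff ?g i \<in> N" for i
    using poly_over_prod_linear[OF N insert(1)] insert(4) unfolding poly_over_def by auto
  have y: "y \<in> N" using insert by auto
  have dN: "d \<in> N" using g subfieldD(1)[OF N] by (simp add: d_def)
  have \<tau>d: "\<tau> d = (if n = 0 then 0 else coeff (\<Prod>y\<in>Os. [:- \<tau> y, 1:]) (n - 1))"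
    using insert hom_fixing_zero[OF hom N] by (simp add: d_def)
  have "\<tau> (coeff (\<Prod>y\<in>insert y Os. [:- y, 1:]) n) = \<tau> (- y * coeff ?g n + d)"
    using insert(1,2) coeff_linear_mult[of y ?g n] by (simp add: d_def)
  also have "\<dots> = - \<tau> y * \<tau> (coeff ?g n) + \<tau> d"
    using y g dN subfield_uminus[OF N] subfieldD(5)[OF N]
    by (simp add: hom_fixing_add[OF hom] hom_fixing_diff[OF hom N] hom_fixing_mult[OF hom]
        hom_fixing_uminus[OF hom N])
  also have "\<dots> = coeff (\<Prod>y\<in>insert y Os. [:- \<tau> y, 1:]) n"
    using insert \<tau>d coeff_linear_mult[of "\<tau> y" _ n] by simp
  finally show ?case .
qed

lemma hom_fixing_coeff_prod_linear_permuted: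
  assumes N: "subfield N" and hom: "hom_fixing K N \<tau>"
    and Os: "finite Os" "Os \<subseteq> N" and perm: "\<tau> ` Os \<subseteq> Os"
  shows "\<tau> (coeff (\<Prod>y\<in>Os. [:- y, 1:]) n) = coeff (\<Prod>y\<in>Os. [:- y, 1:]) n"
proof -
  have inj: "inj_on \<tau> Os" using hom_fixing_inj_on[OF hom N] Os(2) by (rule inj_on_subset)
  then have "\<tau> ` Os = Os" using endo_inj_surj[OF Os(1) perm] by blast
  then have "(\<Prod>y\<in>Os. [:- \<tau> y, 1:]) = (\<Prod>y\<in>Os. [:- y, 1:])"
    using prod.reindex[OF inj, of "\<lambda>y. [:- y, 1:]"] by simp
  then show ?thesis using hom_fixing_coeff_prod_linear[OF N hom Os] by simp
qed

lemma dvd_prod_linear_splits: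
  fixes q :: "'a::field poly"
  shows "finite Os \<Longrightarrow> q dvd (\<Prod>y\<in>Os. [:- y, 1:]) \<Longrightarrow> q \<noteq> 0 \<Longrightarrow>
    \<exists>rs. distinct rs \<and> set rs \<subseteq> Os \<and> q = smult (lead_coeff q) (\<Prod>r\<leftarrow>rs. [:- r, 1:])"
proof (induction Os arbitrary: q rule: finite_induct)
  case empty
  then have "degree q = 0" by (simp add: is_unit_iff_degree)
  then have "q = [:lead_coeff q:]" by (metis degree_0_id)
  then show ?case by (intro exI[of _ "[]"]) (simp add: one_pCons)
next
  case (insert y Os)
  let ?l = "[:- y, 1:] :: 'a poly" and ?g = "\<Prod>y\<in>Os. [:- y, 1:]"
  have dvd: "q dvd ?l * ?g" using insert by simp
  show ?case
  proof (cases "poly q y = 0")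
    case True
    then obtain q' where q': "q = ?l * q'" by (metis dvdE poly_eq_0_iff_dvd)
    have "q' \<noteq> 0" using q' insert.prems by auto
    moreover have "q' dvd ?g"
      using dvd unfolding q' by (simp only: dvd_mult_cancel_left pCons_eq_0_iff one_neq_zero) simp
    ultimately obtain rs where rs: "distinct rs" "set rs \<subseteq> Os"
      "q' = smult (lead_coeff q') (\<Prod>r\<leftarrow>rs. [:- r, 1:])"
      using insert.IH by blast
    have lc: "lead_coeff q = lead_coeff q'" unfolding q' lead_coeff_mult by simp
    have "q = ?l * smult (lead_coeff q') (\<Prod>r\<leftarrow>rs. [:- r, 1:])" using q' rs(3) by simp
    also have "\<dots> = smult (lead_coeff q) (\<Prod>r\<leftarrow>y # rs. [:- r, 1:])"
      by (simp only: mult_smult_right lc list.map prod_list.Cons)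
    finally have "q = smult (lead_coeff q) (\<Prod>r\<leftarrow>y # rs. [:- r, 1:])" .
    moreover have "distinct (y # rs)" "set (y # rs) \<subseteq> insert y Os"
      using rs insert by auto
    ultimately show ?thesis by blast
  next
    case False
    text \<open>Then y is a root of the cofactor, so q already divides the product over Os.\<close>
    obtain h where h: "?l * ?g = q * h" using dvd by (metis dvdE)
    have "poly (q * h) y = 0" using h[symmetric] by simp
    then have "poly h y = 0" using False by simp
    then obtain h' where "h = ?l * h'" by (metis dvdE poly_eq_0_iff_dvd)
    then have "?l * ?g = ?l * (q * h')" using h by (simp add: mult.left_commute)
    then have "?g = q * h'" by (metis mult_left_cancel pCons_eq_0_iff one_neq_zero)
    then have "q dvd ?g" by simp
    then obtain rs where "distinct rs" "set rs \<subseteq> Os" "q = smult (lead_coeff q) (\<Prod>r\<leftarrow>rs. [:- r, 1:])"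
      using insert.IH insert.prems(2) by blast
    then show ?thesis by (intro exI[of _ rs]) auto
  qed
qed

lemma galois_over_of_orbit_polys:
  assumes K: "subfield K" and N: "subfield N" and KN: "K \<subseteq> N"
    and orb: "\<And>x. x \<in> N \<Longrightarrow>
      \<exists>Os. finite Os \<and> Os \<subseteq> N \<and> x \<in> Os \<and> poly_over K (\<Prod>y\<in>Os. [:- y, 1:])"
  shows "galois_over K N"
  unfolding galois_over_def
proof (intro conjI K N KN ballI)
  fix x assume "x \<in> N"
  then obtain Os where Os: "finite Os" "Os \<subseteq> N" "x \<in> Os" "poly_over K (\<Prod>y\<in>Os. [:- y, 1:])"
    using orb by blast
  let ?f = "\<Prod>y\<in>Os. [:- y, 1:]"
  let ?P = "\<lambda>q. poly_over K q \<and> q \<noteq> 0 \<and> poly q x = 0 \<and> q dvd ?f"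
  have "?P ?f" using Os by (simp add: poly_prod prod_zero_iff)
  then obtain q where q: "?P q" and qmin: "\<And>r. ?P r \<Longrightarrow> degree q \<le> degree r"
    using ex_has_least_nat[of ?P ?f degree] by blast
  have dq: "degree q \<ge> 1"
  proof (rule ccontr)
    assume "\<not> 1 \<le> degree q"
    then have "q = [:coeff q 0:]" by (metis degree_0_id less_one not_le)
    then show False using q by (metis poly_pCons mult_zero_right add.right_neutral pCons_0_0 poly_0)
  qed
  have "irreducible_over K q"
    unfolding irreducible_over_def
  proof (intro conjI dq notI)
    show "poly_over K q" using q by simp
    assume "\<exists>q1 q2. poly_over K q1 \<and> poly_over K q2 \<and> 1 \<le> degree q1 \<and> 1 \<le> degree q2 \<and> q = q1 * q2"
    then obtain q1 q2 where qq: "poly_over K q1" "poly_over K q2" "1 \<le> degree q1" "1 \<le> degree q2"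
      "q = q1 * q2" by blast
    have nz: "q1 \<noteq> 0" "q2 \<noteq> 0" using qq by auto
    have dg: "degree q = degree q1 + degree q2" using qq(5) degree_mult_eq[OF nz] by simp
    have "poly q1 x = 0 \<or> poly q2 x = 0" using q qq(5) by simp
    then have "?P q1 \<or> ?P q2" using qq nz q dvd_trans[of q1 q ?f] dvd_trans[of q2 q ?f] by auto
    then show False using qmin dg qq(3,4) by fastforce
  qed
  moreover obtain rs where "distinct rs" "set rs \<subseteq> Os" "q = smult (lead_coeff q) (\<Prod>r\<leftarrow>rs. [:- r, 1:])"
    using dvd_prod_linear_splits[OF Os(1)] q by blast
  ultimately show "\<exists>p. irreducible_over K p \<and> poly p x = 0 \<and>
      (\<exists>rs. distinct rs \<and> set rs \<subseteq> N \<and> p = smult (lead_coeff p) (\<Prod>r\<leftarrow>rs. [:- r, 1:]))"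
    using q Os(2) by blast
qed

lemma galois_over_if_locally_galois:
  assumes K: "subfield K" and M: "subfield M" and KM: "K \<subseteq> M"
    and local: "\<And>x. x \<in> M \<Longrightarrow> \<exists>N. galois_over K N \<and> N \<subseteq> M \<and> x \<in> N"
  shows "galois_over K M"
  unfolding galois_over_def
proof (intro conjI K M KM ballI)
  fix x assume "x \<in> M"
  then obtain N where N: "galois_over K N" "N \<subseteq> M" "x \<in> N" using local by blast
  then obtain p rs where "irreducible_over K p" "poly p x = 0" "distinct rs" "set rs \<subseteq> N"
    "p = smult (lead_coeff p) (\<Prod>r\<leftarrow>rs. [:- r, 1:])"
    unfolding galois_over_def by blast
  then show "\<exists>p. irreducible_over K p \<and> poly p x = 0 \<and>
      (\<exists>rs. distinct rs \<and> set rs \<subseteq> M \<and> p = smult (lead_coeff p) (\<Prod>r\<leftarrow>rs. [:- r, 1:]))"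
    using N(2) by blast
qed

section \<open>Towers of square roots\<close>

definition tower :: "'a::field set \<Rightarrow> 'a list \<Rightarrow> nat \<Rightarrow> 'a set" where
  "tower K zs i = gen_field (K \<union> set (take i zs))"

definition sqrt_tower :: "'a::field set \<Rightarrow> 'a list \<Rightarrow> bool" where
  "sqrt_tower K zs \<longleftrightarrow> (\<forall>i<length zs. zs ! i * zs ! i \<in> tower K zs i)"

lemma subfield_tower: "subfield (tower K zs i)"
  unfolding tower_def by (rule subfield_gen_field)

lemma tower_0: "subfield K \<Longrightarrow> tower K zs 0 = K"
  unfolding tower_def by (simp add: gen_field_idem)

lemma tower_length: "tower K zs (length zs) = gen_field (K \<union> set zs)"
  unfolding tower_def by simp

lemma tower_mono: "i \<le> j \<Longrightarrow> tower K zs i \<subseteq> tower K zs j"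
  unfolding tower_def by (intro gen_field_mono Un_mono order_refl set_take_subset_set_take)

lemma tower_superset: "K \<subseteq> tower K zs i"
  unfolding tower_def using gen_field_superset by blast

lemma tower_Suc: "i < length zs \<Longrightarrow> tower K zs (Suc i) = gen_field (tower K zs i \<union> {zs ! i})"
proof -
  assume "i < length zs"
  then have "K \<union> set (take (Suc i) zs) = (K \<union> set (take i zs)) \<union> {zs ! i}"
    by (auto simp: take_Suc_conv_app_nth)
  then show ?thesis
    unfolding tower_def by (simp only: gen_field_Un_gen_field)
qed

lemma tower_Suc_quad_span:
  "sqrt_tower K zs \<Longrightarrow> i < length zs \<Longrightarrow> tower K zs (Suc i) = quad_span (tower K zs i) (zs ! i)"
proof -
  assume "sqrt_tower K zs" "i < length zs"
  then have "zs ! i * zs ! i \<in> tower K zs i" unfolding sqrt_tower_def by blast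
  then show ?thesis
    using tower_Suc[OF \<open>i < length zs\<close>] gen_field_insert_sqrt[OF subfield_tower] by simp
qed

lemma nth_mem_tower_Suc: "i < length zs \<Longrightarrow> zs ! i \<in> tower K zs (Suc i)"
  using tower_Suc[of i zs K] gen_field_superset by blast

lemma sqrt_tower_extend_hom:
  fixes K :: "'a::field set"
  assumes qc: "\<forall>x::'a. \<exists>y. y * y = x" and tw: "sqrt_tower K zs" and i: "i \<le> length zs"
    and hom: "hom_fixing K (tower K zs i) \<sigma>"
  shows "\<exists>\<tau>. hom_fixing K (tower K zs (length zs)) \<tau> \<and> (\<forall>x\<in>tower K zs i. \<tau> x = \<sigma> x)"
proof -
  have "\<exists>\<tau>. hom_fixing K (tower K zs j) \<tau> \<and> (\<forall>x\<in>tower K zs i. \<tau> x = \<sigma> x)"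
    if "i \<le> j" "j \<le> length zs" for j
    using that
  proof (induction j rule: dec_induct)
    case base
    then show ?case using hom by blast
  next
    case (step j)
    then obtain \<sigma>' where \<sigma>': "hom_fixing K (tower K zs j) \<sigma>'" "\<forall>x\<in>tower K zs i. \<sigma>' x = \<sigma> x"
      by auto
    have j: "j < length zs" using step by simp
    let ?A = "tower K zs j" and ?z = "zs ! j"
    show ?case
    proof (cases "?z \<in> ?A")
      case True
      then have "tower K zs (Suc j) = ?A"
        using tower_Suc[OF j] gen_field_idem[OF subfield_tower] by (simp add: insert_absorb)
      then show ?thesis using \<sigma>' by auto
    next
      case False
      obtain z' where z': "z' * z' = \<sigma>' (?z * ?z)" using qc by blast
      have "?z * ?z \<in> ?A" using tw j unfolding sqrt_tower_def by blast
      from hom_fixing_extend_sqrt[OF subfield_tower tower_superset \<sigma>'(1) this False z']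
      obtain \<tau> where "hom_fixing K (tower K zs (Suc j)) \<tau>" "\<forall>x\<in>?A. \<tau> x = \<sigma>' x"
        unfolding tower_Suc[OF j] by blast
      moreover have "tower K zs i \<subseteq> ?A" using step tower_mono by blast
      ultimately show ?thesis using \<sigma>'(2) by (metis subsetD)
    qed
  qed
  then show ?thesis using i by blast
qed

text \<open>The homomorphism fixing a level and negating the next square root shows that an element
  fixed by all homomorphisms has no component along that square root.\<close>
lemma sqrt_tower_fixed_field:
  fixes K :: "'a::field set"
  assumes qc: "\<forall>x::'a. \<exists>y. y * y = x" and K: "subfield K" and two: "(1::'a) + 1 \<noteq> 0"
    and tw: "sqrt_tower K zs" and x: "x \<in> gen_field (K \<union> set zs)"
    and fixed: "\<And>\<sigma>. hom_fixing K (gen_field (K \<union> set zs)) \<sigma> \<Longrightarrow> \<sigma> x = x"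
  shows "x \<in> K"
proof -
  let ?N = "tower K zs (length zs)"
  have "x \<in> K" if "i \<le> length zs" "x \<in> tower K zs i" for i
    using that
  proof (induction i)
    case 0
    then show ?case using tower_0[OF K] by simp
  next
    case (Suc i)
    let ?A = "tower K zs i" and ?z = "zs ! i"
    have i: "i < length zs" using Suc by simp
    have A_sub: "?A \<subseteq> tower K zs (Suc i)" by (rule tower_mono) simp
    obtain a b where ab: "a \<in> ?A" "b \<in> ?A" "x = a + b * ?z"
      using Suc.prems(2) tower_Suc_quad_span[OF tw i] by (auto elim!: quad_spanE)
    show ?case
    proof (cases "?z \<in> ?A")
      case True
      then have "x \<in> ?A"
        using ab quad_span_subset[OF subfield_tower order_refl True] quad_spanI by blast
      then show ?thesis using Suc i by simp
    next
      case False
      have sq: "?z * ?z \<in> ?A" using tw i unfolding sqrt_tower_def by blast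
      obtain \<tau>0 where \<tau>0: "hom_fixing K (tower K zs (Suc i)) \<tau>0" "\<forall>y\<in>?A. \<tau>0 y = y" "\<tau>0 ?z = - ?z"
        using hom_fixing_extend_sqrt[OF subfield_tower tower_superset hom_fixing_id sq False, of "- ?z"]
          tower_Suc[OF i] by auto
      obtain \<tau> where \<tau>: "hom_fixing K ?N \<tau>" "\<forall>y\<in>tower K zs (Suc i). \<tau> y = \<tau>0 y"
        using sqrt_tower_extend_hom[OF qc tw _ \<tau>0(1)] i by auto
      have zS: "?z \<in> tower K zs (Suc i)" by (rule nth_mem_tower_Suc[OF i])
      have "x = \<tau> x" using fixed[of \<tau>] \<tau>(1) unfolding tower_length by simp
      also have "\<dots> = \<tau>0 x"
        using \<tau>(2) Suc.prems(2) A_sub by blast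
      also have "\<dots> = \<tau>0 a + \<tau>0 b * \<tau>0 ?z"
        using ab A_sub zS by (auto intro: hom_fixing_add_mult[OF \<tau>0(1) subfield_tower])
      also have "\<dots> = a - b * ?z" using \<tau>0 ab by simp
      finally have "(1 + 1) * (b * ?z) = 0" using ab(3) by (simp add: algebra_simps)
      moreover have "?z \<noteq> 0" using False subfieldD(1)[OF subfield_tower] by metis
      ultimately have "b = 0" using two by simp
      then show ?thesis using Suc ab i by simp
    qed
  qed
  then show ?thesis using x by (metis order_refl tower_length)
qed

lemma finite_sqrts: "finite {y::'a::field. y * y = v}"
proof (cases "\<exists>w. w * w = v")
  case True
  then obtain w where "w * w = v" by blast
  then have "{y. y * y = v} \<subseteq> {w, - w}" by (auto simp: square_eq_iff)
  then show ?thesis by (rule finite_subset) simp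
qed simp

lemma finite_orbit_sqrt_tower:
  assumes K: "subfield K" and tw: "sqrt_tower K zs"
  shows "i \<le> length zs \<Longrightarrow> x \<in> tower K zs i \<Longrightarrow> finite {\<sigma> x |\<sigma>. hom_fixing K (tower K zs i) \<sigma>}"
proof (induction i arbitrary: x)
  case 0
  then have "{\<sigma> x |\<sigma>. hom_fixing K (tower K zs 0) \<sigma>} \<subseteq> {x}"
    using tower_0[OF K] hom_fixing_fix by blast
  then show ?case by (rule finite_subset) simp
next
  case (Suc i)
  let ?A = "tower K zs i" and ?z = "zs ! i" and ?S = "tower K zs (Suc i)"
  let ?orb = "\<lambda>y. {\<sigma> y |\<sigma>. hom_fixing K ?A \<sigma>}"
  have i: "i < length zs" using Suc by simp
  have A_sub: "?A \<subseteq> ?S" by (rule tower_mono) simp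
  have zS: "?z \<in> ?S" by (rule nth_mem_tower_Suc[OF i])
  have sq: "?z * ?z \<in> ?A" using tw i unfolding sqrt_tower_def by blast
  obtain a b where ab: "a \<in> ?A" "b \<in> ?A" "x = a + b * ?z"
    using Suc.prems(2) tower_Suc_quad_span[OF tw i] by (auto elim!: quad_spanE)
  let ?R = "\<Union>v\<in>?orb (?z * ?z). {y. y * y = v}"
  have "{\<sigma> x |\<sigma>. hom_fixing K ?S \<sigma>} \<subseteq> (\<lambda>(p, q, r). p + q * r) ` (?orb a \<times> ?orb b \<times> ?R)"
  proof
    fix y assume "y \<in> {\<sigma> x |\<sigma>. hom_fixing K ?S \<sigma>}"
    then obtain \<sigma> where \<sigma>: "hom_fixing K ?S \<sigma>" and y: "y = \<sigma> x" by blast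
    have \<sigma>A: "hom_fixing K ?A \<sigma>" using hom_fixing_mono[OF \<sigma> A_sub] .
    have "y = \<sigma> a + \<sigma> b * \<sigma> ?z"
      using ab y A_sub zS by (auto intro: hom_fixing_add_mult[OF \<sigma> subfield_tower])
    moreover have "\<sigma> ?z * \<sigma> ?z = \<sigma> (?z * ?z)"
      using zS by (simp add: hom_fixing_mult[OF \<sigma>])
    then have "(\<sigma> a, \<sigma> b, \<sigma> ?z) \<in> ?orb a \<times> ?orb b \<times> ?R"
      using \<sigma>A by blast
    ultimately show "y \<in> (\<lambda>(p, q, r). p + q * r) ` (?orb a \<times> ?orb b \<times> ?R)"
      by (intro image_eqI[of _ _ "(\<sigma> a, \<sigma> b, \<sigma> ?z)"]) auto
  qed
  moreover have "finite (?orb a \<times> ?orb b \<times> ?R)"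
  proof -
    have "finite (?orb a)" "finite (?orb b)" "finite (?orb (?z * ?z))"
      using Suc.IH i ab sq by simp_all
    then show ?thesis by (simp add: finite_sqrts)
  qed
  ultimately show ?case by (meson finite_imageI finite_subset)
qed

text \<open>The orbit polynomial of x under all K-homomorphisms of the top field has coefficients
  fixed by every such homomorphism, since these permute the orbit.\<close>
lemma sqrt_tower_galois_over:
  fixes K :: "'a::field set"
  assumes qc: "\<forall>x::'a. \<exists>y. y * y = x" and K: "subfield K" and two: "(1::'a) + 1 \<noteq> 0"
    and tw: "sqrt_tower K zs"
    and stable: "\<And>\<sigma>. hom_fixing K (gen_field (K \<union> set zs)) \<sigma> \<Longrightarrow>
      \<sigma> ` gen_field (K \<union> set zs) \<subseteq> gen_field (K \<union> set zs)"
  shows "galois_over K (gen_field (K \<union> set zs))"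
proof (rule galois_over_of_orbit_polys[OF K subfield_gen_field])
  let ?N = "gen_field (K \<union> set zs)"
  show "K \<subseteq> ?N" using gen_field_superset by blast
  fix x assume x: "x \<in> ?N"
  define Os where "Os = {\<sigma> x |\<sigma>. hom_fixing K ?N \<sigma>}"
  have fin: "finite Os"
    unfolding Os_def using finite_orbit_sqrt_tower[OF K tw, of "length zs"] x by (simp add: tower_length)
  have sub: "Os \<subseteq> ?N" unfolding Os_def using stable x by blast
  have "x \<in> Os" unfolding Os_def by (intro CollectI exI[of _ id]) (simp add: hom_fixing_id)
  moreover have "coeff (\<Prod>y\<in>Os. [:- y, 1:]) n \<in> K" for n
  proof (rule sqrt_tower_fixed_field[OF qc K two tw])
    show "coeff (\<Prod>y\<in>Os. [:- y, 1:]) n \<in> ?N"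
      using poly_over_prod_linear[OF subfield_gen_field fin sub] unfolding poly_over_def by blast
    fix \<tau> assume \<tau>: "hom_fixing K ?N \<tau>"
    have "\<tau> ` Os \<subseteq> Os"
    proof
      fix u assume "u \<in> \<tau> ` Os"
      then obtain \<sigma> where \<sigma>: "hom_fixing K ?N \<sigma>" and u: "u = (\<tau> \<circ> \<sigma>) x"
        unfolding Os_def by auto
      have "hom_fixing K ?N (\<tau> \<circ> \<sigma>)" by (rule hom_fixing_comp[OF \<sigma> stable[OF \<sigma>] \<tau>])
      then show "u \<in> Os" unfolding Os_def u by (intro CollectI exI[of _ "\<tau> \<circ> \<sigma>"]) simp
    qed
    then show "\<tau> (coeff (\<Prod>y\<in>Os. [:- y, 1:]) n) = coeff (\<Prod>y\<in>Os. [:- y, 1:]) n"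
      by (rule hom_fixing_coeff_prod_linear_permuted[OF subfield_gen_field \<tau> fin sub])
  qed
  ultimately show "\<exists>Os. finite Os \<and> Os \<subseteq> ?N \<and> x \<in> Os \<and> poly_over K (\<Prod>y\<in>Os. [:- y, 1:])"
    using fin sub unfolding poly_over_def by blast
qed

lemma galois_over_gen_field_sqrt:
  fixes K :: "'a::field set"
  assumes qc: "\<forall>x::'a. \<exists>y. y * y = x" and K: "subfield K" and two: "(1::'a) + 1 \<noteq> 0"
    and sq: "z * z \<in> K"
  shows "galois_over K (gen_field (K \<union> {z}))"
proof -
  have "sqrt_tower K [z]"
    unfolding sqrt_tower_def using sq tower_0[OF K] by simp
  moreover have "\<sigma> ` gen_field (K \<union> {z}) \<subseteq> gen_field (K \<union> {z})"
    if \<sigma>: "hom_fixing K (gen_field (K \<union> {z})) \<sigma>" for \<sigma>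
  proof (rule hom_fixing_image_gen_field_subset[OF \<sigma> subfield_gen_field])
    have z: "z \<in> gen_field (K \<union> {z})" and "K \<subseteq> gen_field (K \<union> {z})"
      using gen_field_superset by blast+
    moreover have "\<sigma> z * \<sigma> z = z * z"
      using z sq hom_fixing_mult[OF \<sigma> z z] hom_fixing_fix[OF \<sigma>]
      by simp
    then have "\<sigma> z = z \<or> \<sigma> z = - z" by (simp only: square_eq_iff)
    ultimately show "\<sigma> ` (K \<union> {z}) \<subseteq> gen_field (K \<union> {z})"
      using hom_fixing_fix[OF \<sigma>] subfield_uminus[OF subfield_gen_field] by auto
  qed
  ultimately show ?thesis
    using sqrt_tower_galois_over[OF qc K two, of "[z]"] by simp
qed

section \<open>The second and third steps\<close>

definition sqrts :: "'a::field set \<Rightarrow> 'a set" where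
  "sqrts K = {t. t * t \<in> K}"

lemma subset_sqrts: "subfield K \<Longrightarrow> K \<subseteq> sqrts K"
  unfolding sqrts_def using subfieldD(5) by blast

lemma sqrts_mono: "K \<subseteq> L \<Longrightarrow> sqrts K \<subseteq> sqrts L"
  unfolding sqrts_def by blast

text \<open>The tower is stable under all L-homomorphisms: they send each t_i to \<plusminus>t_i, and w to
  a root of p, which lies in the tower by hypothesis.\<close>
lemma galois_over_sqrts_snoc:
  fixes L :: "'a::field set"
  assumes qc: "\<forall>x::'a. \<exists>y. y * y = x" and L: "subfield L" and two: "(1::'a) + 1 \<noteq> 0"
    and ts: "set ts \<subseteq> sqrts L" and sq: "w * w \<in> gen_field (L \<union> set ts)"
    and p: "poly_over L p" "poly p w = 0"
    and roots: "\<And>y. poly p y = 0 \<Longrightarrow> y \<in> quad_span (gen_field (L \<union> set ts)) w"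
  shows "galois_over L (gen_field (L \<union> set (ts @ [w])))"
proof (rule sqrt_tower_galois_over[OF qc L two])
  let ?zs = "ts @ [w]"
  let ?N = "gen_field (L \<union> set ?zs)"
  show "sqrt_tower L ?zs"
    unfolding sqrt_tower_def
  proof (intro allI impI)
    fix i assume "i < length ?zs"
    then consider "i < length ts" | "i = length ts" by fastforce
    then show "?zs ! i * ?zs ! i \<in> tower L ?zs i"
    proof cases
      case 1
      then have "ts ! i * ts ! i \<in> L" using ts nth_mem unfolding sqrts_def by blast
      then show ?thesis using 1 tower_superset by (auto simp: nth_append)
    next
      case 2
      then show ?thesis using sq by (simp add: tower_def)
    qed
  qed
  fix \<sigma> assume \<sigma>: "hom_fixing L ?N \<sigma>"
  have N: "subfield ?N" by (rule subfield_gen_field)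
  have gens: "L \<union> set ?zs \<subseteq> ?N" by (rule gen_field_superset)
  have "\<sigma> t \<in> ?N" if "t \<in> set ts" for t
  proof -
    have t: "t \<in> ?N" "t * t \<in> L" using that ts gens by (auto simp: sqrts_def)
    then have "\<sigma> t * \<sigma> t = t * t"
      using hom_fixing_mult[OF \<sigma> t(1) t(1)] hom_fixing_fix[OF \<sigma>] by simp
    then have "\<sigma> t = t \<or> \<sigma> t = - t" by (simp only: square_eq_iff)
    then show ?thesis using t subfield_uminus[OF N] by auto
  qed
  moreover have "\<sigma> w \<in> ?N"
  proof -
    have w: "w \<in> ?N" using gens by auto
    have "poly p (\<sigma> w) = \<sigma> (poly p w)"
      using hom_fixing_poly[OF \<sigma> N _ w p(1)] gens by auto
    then have "\<sigma> w \<in> quad_span (gen_field (L \<union> set ts)) w"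
      using roots p(2) hom_fixing_zero[OF \<sigma> N] by simp
    moreover have "gen_field (L \<union> set ts) \<subseteq> ?N" by (intro gen_field_mono) auto
    ultimately show ?thesis using quad_span_subset[OF N _ w] by blast
  qed
  ultimately have "\<sigma> ` (L \<union> set ?zs) \<subseteq> ?N"
    using hom_fixing_fix[OF \<sigma>] gens by auto
  then show "\<sigma> ` ?N \<subseteq> ?N"
    by (rule hom_fixing_image_gen_field_subset[OF \<sigma> N])
qed

lemma galois_over_gen_field_sqrts_insert:
  fixes L :: "'a::field set"
  assumes qc: "\<forall>x::'a. \<exists>y. y * y = x" and L: "subfield L" and two: "(1::'a) + 1 \<noteq> 0"
    and sq: "w * w \<in> gen_field (sqrts L)"
    and p: "poly_over L p" "p \<noteq> 0" "poly p w = 0"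
    and roots: "\<And>y. poly p y = 0 \<Longrightarrow> y \<in> quad_span (gen_field (sqrts L)) w"
  shows "galois_over L (gen_field (gen_field (sqrts L) \<union> {w}))"
proof -
  let ?B = "gen_field (sqrts L)"
  let ?M = "gen_field (?B \<union> {w})"
  have B: "subfield ?B" by (rule subfield_gen_field)
  have LB: "L \<subseteq> ?B" using subset_sqrts[OF L] gen_field_superset by blast
  have M: "?M = quad_span ?B w" by (rule gen_field_insert_sqrt[OF B sq])
  show ?thesis
  proof (rule galois_over_if_locally_galois[OF L subfield_gen_field])
    show "L \<subseteq> ?M" using LB gen_field_superset by blast
    fix x assume "x \<in> ?M"
    then obtain u v where uv: "u \<in> ?B" "v \<in> ?B" "x = u + v * w"
      unfolding M by (rule quad_spanE)
    let ?R = "{y. poly p y = 0}"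
    have "\<forall>y\<in>?R. \<exists>a\<in>?B. \<exists>b\<in>?B. y = a + b * w"
      using roots by (blast elim: quad_spanE)
    then obtain a b where ab: "\<And>y. y \<in> ?R \<Longrightarrow> a y \<in> ?B \<and> b y \<in> ?B \<and> y = a y + b y * w"
      by metis
    text \<open>Finitely many square roots of elements of L generate everything in sight.\<close>
    let ?X = "{u, v, w * w} \<union> a ` ?R \<union> b ` ?R"
    have "finite ?X" using poly_roots_finite[OF p(2)] by simp
    moreover have "?X \<subseteq> ?B" using uv sq ab by auto
    ultimately obtain T where T: "finite T" "T \<subseteq> sqrts L" "?X \<subseteq> gen_field T"
      using finite_subset_gen_field_finite_support by metis
    obtain ts where ts: "set ts = T" using finite_list[OF T(1)] by blast
    let ?C = "gen_field (L \<union> set ts)"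
    have XC: "?X \<subseteq> ?C" using T(3) gen_field_mono[of T "L \<union> set ts"] ts by auto
    have "galois_over L (gen_field (L \<union> set (ts @ [w])))"
    proof (rule galois_over_sqrts_snoc[OF qc L two _ _ p(1,3)])
      show "set ts \<subseteq> sqrts L" "w * w \<in> ?C" using T ts XC by auto
      fix y assume "poly p y = 0"
      then have "a y \<in> ?C" "b y \<in> ?C" "y = a y + b y * w" using ab[of y] XC by auto
      then show "y \<in> quad_span ?C w" by (metis quad_spanI)
    qed
    moreover have "gen_field (L \<union> set (ts @ [w])) \<subseteq> ?M"
    proof (rule gen_field_least[OF subfield_gen_field])
      have "T \<subseteq> ?B" using T(2) gen_field_superset[of "sqrts L"] by (rule order_trans)
      then show "L \<union> set (ts @ [w]) \<subseteq> ?M" using LB ts gen_field_superset[of "?B \<union> {w}"] by auto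
    qed
    moreover have "x \<in> gen_field (L \<union> set (ts @ [w]))"
    proof -
      have "?C \<subseteq> gen_field (L \<union> set (ts @ [w]))" by (intro gen_field_mono) auto
      then have "u \<in> gen_field (L \<union> set (ts @ [w]))" "v \<in> gen_field (L \<union> set (ts @ [w]))"
        using uv XC by auto
      moreover have "w \<in> gen_field (L \<union> set (ts @ [w]))"
        using gen_field_superset[of "L \<union> set (ts @ [w])"] by auto
      ultimately show ?thesis
        unfolding uv(3) by (intro subfieldD(3,5)[OF subfield_gen_field])
    qed
    ultimately show "\<exists>N. galois_over L N \<and> N \<subseteq> ?M \<and> x \<in> N" by blast
  qed
qed

lemma subfield_quad_step: "subfield (quad_step K M)"
  unfolding quad_step_def by (rule subfield_gen_field)

lemma quad_step_superset: "M \<subseteq> quad_step K M"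
  unfolding quad_step_def by (meson Un_upper1 gen_field_superset order_trans)

lemma subset_quad_step: "quadratic_ext M E \<Longrightarrow> galois_over K E \<Longrightarrow> E \<subseteq> quad_step K M"
  unfolding quad_step_def
  by (rule order_trans[OF _ gen_field_superset], rule order_trans[OF _ Un_upper2]) auto

lemma quad_step_least:
  assumes "subfield X" "M \<subseteq> X"
    and "\<And>E. quadratic_ext M E \<Longrightarrow> galois_over K E \<Longrightarrow> E \<subseteq> X"
  shows "quad_step K M \<subseteq> X"
  unfolding quad_step_def using assms by (intro gen_field_least) auto

lemma quad_step_eq_gen_field_sqrts:
  fixes K :: "'a::field set"
  assumes qc: "\<forall>x::'a. \<exists>y. y * y = x" and K: "subfield K" and two: "(1::'a) + 1 \<noteq> 0"
  shows "quad_step K K = gen_field (sqrts K)"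
proof
  show "quad_step K K \<subseteq> gen_field (sqrts K)"
  proof (rule quad_step_least[OF subfield_gen_field])
    show KS: "K \<subseteq> gen_field (sqrts K)"
      using subset_sqrts[OF K] gen_field_superset by blast
    fix E assume "quadratic_ext K E"
    then obtain t where "t \<in> E" "t * t \<in> K" "t \<notin> K" and E: "E \<subseteq> quad_span K t"
      by (rule quadratic_ext_sqrt_generator[OF K two])
    then have "t \<in> sqrts K" unfolding sqrts_def by simp
    then have "t \<in> gen_field (sqrts K)" by (rule subsetD[OF gen_field_superset])
    then have "quad_span K t \<subseteq> gen_field (sqrts K)"
      by (rule quad_span_subset[OF subfield_gen_field KS])
    with E show "E \<subseteq> gen_field (sqrts K)" by (rule order_trans)
  qed
  show "gen_field (sqrts K) \<subseteq> quad_step K K"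
  proof (rule gen_field_least[OF subfield_quad_step], rule subsetI)
    fix t assume "t \<in> sqrts K"
    then have sq: "t * t \<in> K" unfolding sqrts_def by simp
    show "t \<in> quad_step K K"
    proof (cases "t \<in> K")
      case True
      then show ?thesis by (rule subsetD[OF quad_step_superset])
    next
      case False
      have "gen_field (K \<union> {t}) \<subseteq> quad_step K K"
        using quadratic_ext_gen_field_sqrt[OF K sq False] galois_over_gen_field_sqrt[OF qc K two sq]
        by (rule subset_quad_step)
      then show ?thesis using gen_field_superset[of "K \<union> {t}"] by auto
    qed
  qed
qed

lemma quadratic_galois_ext_subset_quad_step:
  fixes F L :: "'a::field set"
  assumes qc: "\<forall>x::'a. \<exists>y. y * y = x" and F: "subfield F" and L: "subfield L" and FL: "F \<subseteq> L"
    and two: "(1::'a) + 1 \<noteq> 0"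
    and q: "quadratic_ext (quad_step F F) E" and g: "galois_over F E"
  shows "E \<subseteq> quad_step L (quad_step L L)"
proof -
  let ?L2 = "quad_step L L" and ?F2 = "quad_step F F"
  have L2: "?L2 = gen_field (sqrts L)" by (rule quad_step_eq_gen_field_sqrts[OF qc L two])
  have F2L2: "?F2 \<subseteq> ?L2"
    unfolding L2 quad_step_eq_gen_field_sqrts[OF qc F two] using FL by (intro gen_field_mono sqrts_mono)
  obtain w where w: "w \<in> E" "w * w \<in> ?F2" "w \<notin> ?F2" and E: "E \<subseteq> quad_span ?F2 w"
    by (rule quadratic_ext_sqrt_generator[OF subfield_quad_step two q])
  obtain p rs where p: "irreducible_over F p" "poly p w = 0"
    and rs: "set rs \<subseteq> E" "p = smult (lead_coeff p) (\<Prod>r\<leftarrow>rs. [:- r, 1:])"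
    using g w(1) unfolding galois_over_def by blast
  have p0: "p \<noteq> 0" and pL: "poly_over L p"
    using p(1) FL unfolding irreducible_over_def poly_over_def by auto
  have sq: "w * w \<in> ?L2" using F2L2 w(2) by (rule subsetD)
  have roots: "y \<in> quad_span ?L2 w" if "poly p y = 0" for y
  proof -
    have "poly (\<Prod>r\<leftarrow>rs. [:- r, 1:]) y = 0"
      using that p0 by (subst (asm) rs(2)) simp
    then have "y \<in> E" using rs(1) poly_prod_linear_root by blast
    then show ?thesis using E quad_span_mono[OF F2L2] by (meson subsetD)
  qed
  have gM: "galois_over L (gen_field (?L2 \<union> {w}))"
    using galois_over_gen_field_sqrts_insert[OF qc L two sq[unfolded L2] pL p0 p(2)] roots
    unfolding L2 by blast
  have "E \<subseteq> gen_field (?L2 \<union> {w})"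
    using E quad_span_mono[OF F2L2] unfolding gen_field_insert_sqrt[OF subfield_quad_step sq]
    by (rule order_trans)
  moreover have "gen_field (?L2 \<union> {w}) \<subseteq> quad_step L ?L2"
  proof (cases "w \<in> ?L2")
    case True
    then have "gen_field (?L2 \<union> {w}) = ?L2"
      using gen_field_idem[OF subfield_quad_step] by (simp add: insert_absorb)
    then show ?thesis using quad_step_superset by simp
  next
    case False
    show ?thesis
      using quadratic_ext_gen_field_sqrt[OF subfield_quad_step sq False] gM by (rule subset_quad_step)
  qed
  ultimately show ?thesis by blast
qed

theorem lemma2:
  fixes F :: "'a::field set" and a s :: 'a
  assumes "subfield F"
    and "(1::'a) + 1 \<noteq> 0"
    and "is_quadratic_closure_of F"
    and "a \<in> F" and "a \<noteq> 0" and "\<not> (\<exists>b\<in>F. b * b = a)"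
    and "s * s = a"
  shows "kup F 3 \<subseteq> kup (gen_field (F \<union> {s})) 3"
proof -
  note F = assms(1) and two = assms(2)
  have qc: "\<forall>x::'a. \<exists>y. y * y = x" using assms(3) unfolding is_quadratic_closure_of_def by blast
  define L where "L = gen_field (F \<union> {s})"
  have L: "subfield L" and FL: "F \<subseteq> L"
    unfolding L_def using subfield_gen_field gen_field_superset by blast+
  have "quad_step F F \<subseteq> quad_step L L"
    using FL by (simp add: quad_step_eq_gen_field_sqrts[OF qc F two] quad_step_eq_gen_field_sqrts[OF qc L two]
        gen_field_mono sqrts_mono)
  also have "\<dots> \<subseteq> quad_step L (quad_step L L)" by (rule quad_step_superset)
  finally have "quad_step F (quad_step F F) \<subseteq> quad_step L (quad_step L L)"
    using quadratic_galois_ext_subset_quad_step[OF qc F L FL two]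
    by (rule quad_step_least[OF subfield_quad_step])
  then show ?thesis unfolding L_def by (simp add: numeral_3_eq_3)
qed

end
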